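(* Let $A$ be a finite set, let $X,Y$ be upward closed subsets of $(A^*,\le_e)$, and let $a\in A$. Then: (1) $X \subseteq a^{-1}X$. (2) If $a \in \operatorname{Som}(X)$, then $X \subsetneq a^{-1}X$. (3) If $X \neq A^*$ and for all $b\in\operatorname{Som}(X)$ we have $b^{-1}X \subseteq b^{-1}Y$, then $X\subseteq Y$.
   Context: $A^*$ is the set of finite words over $A$. The embedding order $\le_e$ is defined by recursion on the length of $x$: the empty word satisfies $\emptyset \le_e y$ for all $y$; if $x = au$ with $a\in A$, $u\in A^*$, then $x\le_e y$ iff there are $v,w\in A^*$ with $y=vaw$ and $u\le_e w$. A subset $X$ is upward closed if $x\in X$, $x\le_e y$ imply $y\in X$. For $X\subseteq A^*$ and $a\in A$, $a^{-1}X := \{y\in A^* \mid ay\in X\}$, and $\operatorname{Som}(X) := \{a\in A \mid \exists u\in A^*: au \text{ is a minimal element of } X \text{ with respect to } \le_e\}$. *)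

theory Defs
  imports Main "HOL-Library.Sublist"
begin

text \<open>Words over the alphabet A are the lists in lists A; the embedding order
  is the subsequence order subseq from HOL-Library.Sublist.\<close>

definition upward_closed :: "'a set \<Rightarrow> 'a list set \<Rightarrow> bool" where
  "upward_closed A X \<longleftrightarrow> X \<subseteq> lists A \<and>
     (\<forall>x y. x \<in> X \<longrightarrow> y \<in> lists A \<longrightarrow> subseq x y \<longrightarrow> y \<in> X)"

definition lquot :: "'a set \<Rightarrow> 'a \<Rightarrow> 'a list set \<Rightarrow> 'a list set" where
  "lquot A a X = {y \<in> lists A. a # y \<in> X}"

definition emb_minimal :: "'a list set \<Rightarrow> 'a list \<Rightarrow> bool" where
  "emb_minimal X x \<longleftrightarrow> x \<in> X \<and> (\<forall>y\<in>X. subseq y x \<longrightarrow> y = x)"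

definition Som :: "'a set \<Rightarrow> 'a list set \<Rightarrow> 'a set" where
  "Som A X = {a \<in> A. \<exists>u \<in> lists A. emb_minimal X (a # u)}"

end

theory Submission
  imports Defs
begin

text \<open>Prepending a letter is an embedding, so an upward closed set is contained in each of its
  left quotients; a minimal word \<open>a # u\<close> of \<open>X\<close> puts \<open>u\<close> into \<open>a\<^sup>-\<^sup>1X\<close> but not into \<open>X\<close>.
  Every word of \<open>X\<close> lies above a minimal one, and if \<open>X \<noteq> A\<^sup>*\<close> that minimal word is nonempty,
  say \<open>b # u\<close> with \<open>b \<in> Som X\<close>, so \<open>b\<^sup>-\<^sup>1X \<subseteq> b\<^sup>-\<^sup>1Y\<close> puts it, and hence the word, into \<open>Y\<close>.\<close>

lemma upward_closed_subset_lists: "upward_closed A X \<Longrightarrow> X \<subseteq> lists A"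
  unfolding upward_closed_def by blast

lemma upward_closedD:
  "upward_closed A X \<Longrightarrow> x \<in> X \<Longrightarrow> y \<in> lists A \<Longrightarrow> subseq x y \<Longrightarrow> y \<in> X"
  unfolding upward_closed_def by blast

lemma emb_minimalD: "emb_minimal X x \<Longrightarrow> x \<in> X"
  unfolding emb_minimal_def by blast

lemma ex_emb_minimal_subseq: "x \<in> X \<Longrightarrow> \<exists>m. emb_minimal X m \<and> subseq m x"
proof (induction "length x" arbitrary: x rule: less_induct)
  case less
  show ?case
  proof (cases "emb_minimal X x")
    case False
    then obtain y where y: "y \<in> X" "subseq y x" "y \<noteq> x"
      using less.prems unfolding emb_minimal_def by blast
    then have "length y < length x"
      by (metis le_neq_implies_less list_emb_length subseq_same_length)
    then obtain m where "emb_minimal X m" "subseq m y"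
      using less.hyps y(1) by blast
    then show ?thesis
      using y(2) subseq_order.trans by blast
  qed auto
qed

lemma Nil_notin_upward_closed:
  assumes "upward_closed A X" and "X \<noteq> lists A"
  shows "[] \<notin> X"
proof
  assume "[] \<in> X"
  then have "lists A \<subseteq> X"
    using upward_closedD[OF assms(1)] by blast
  then show False
    using assms upward_closed_subset_lists by blast
qed

lemma lquotI: "a # u \<in> X \<Longrightarrow> u \<in> lists A \<Longrightarrow> u \<in> lquot A a X"
  unfolding lquot_def by blast

lemma subset_lquot:
  assumes "upward_closed A X" and "a \<in> A"
  shows "X \<subseteq> lquot A a X"
proof
  fix x assume x: "x \<in> X"
  then have "x \<in> lists A"
    using assms(1) upward_closed_subset_lists by blast
  moreover have "a # x \<in> X"
    using upward_closedD[OF assms(1) x] assms(2) \<open>x \<in> lists A\<close> by (simp add: list_emb_Cons)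
  ultimately show "x \<in> lquot A a X"
    by (rule lquotI[rotated])
qed

lemma tl_emb_minimal_notin:
  assumes "emb_minimal X (a # u)"
  shows "u \<notin> X"
proof
  assume "u \<in> X"
  moreover have "subseq u (a # u)"
    by (simp add: list_emb_Cons)
  ultimately have "u = a # u"
    using assms unfolding emb_minimal_def by blast
  then show False
    by simp
qed

lemma psubset_lquot_if_Som:
  assumes "upward_closed A X" and "a \<in> A" and "a \<in> Som A X"
  shows "X \<subset> lquot A a X"
proof -
  obtain u where u: "u \<in> lists A" "emb_minimal X (a # u)"
    using assms(3) unfolding Som_def by blast
  have "u \<in> lquot A a X"
    using lquotI[OF emb_minimalD[OF u(2)] u(1)] .
  moreover have "u \<notin> X"
    using tl_emb_minimal_notin[OF u(2)] .
  ultimately show ?thesis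
    using subset_lquot[OF assms(1,2)] by blast
qed

lemma Som_if_emb_minimal_Cons:
  assumes "X \<subseteq> lists A" and "emb_minimal X (b # u)"
  shows "b \<in> Som A X"
proof -
  have "b # u \<in> lists A"
    using assms(1) emb_minimalD[OF assms(2)] by blast
  then show ?thesis
    using assms(2) unfolding Som_def by auto
qed

lemma upward_closed_subset_if_lquot_Som_subset:
  assumes "upward_closed A X" and "upward_closed A Y" and "X \<noteq> lists A"
    and lquot_subset: "\<And>b. b \<in> Som A X \<Longrightarrow> lquot A b X \<subseteq> lquot A b Y"
  shows "X \<subseteq> Y"
proof
  fix x assume x: "x \<in> X"
  have X_lists: "X \<subseteq> lists A"
    using upward_closed_subset_lists[OF assms(1)] .
  obtain m where m: "emb_minimal X m" "subseq m x"
    using ex_emb_minimal_subseq[OF x] by blast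
  have "m \<in> X"
    using emb_minimalD[OF m(1)] .
  then have "m \<noteq> []"
    using Nil_notin_upward_closed[OF assms(1,3)] by blast
  then obtain b u where m_eq: "m = b # u"
    by (cases m) auto
  have u: "u \<in> lists A"
    using \<open>m \<in> X\<close> X_lists unfolding m_eq by auto
  have "b \<in> Som A X"
    using Som_if_emb_minimal_Cons[OF X_lists] m(1) unfolding m_eq .
  moreover have "u \<in> lquot A b X"
    using \<open>m \<in> X\<close> unfolding m_eq by (rule lquotI[OF _ u])
  ultimately have "u \<in> lquot A b Y"
    using lquot_subset by blast
  then have "m \<in> Y"
    unfolding m_eq lquot_def by blast
  moreover have "x \<in> lists A"
    using x X_lists by blast
  ultimately show "x \<in> Y"
    using upward_closedD[OF assms(2)] m(2) by blast
qed

theorem lemma5p1: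
  fixes A :: "'a set" and X Y :: "'a list set" and a :: 'a
  assumes "finite A"
    and "upward_closed A X" and "upward_closed A Y"
    and "a \<in> A"
  shows "X \<subseteq> lquot A a X
    \<and> (a \<in> Som A X \<longrightarrow> X \<subset> lquot A a X)
    \<and> ((X \<noteq> lists A \<and> (\<forall>b\<in>Som A X. lquot A b X \<subseteq> lquot A b Y)) \<longrightarrow> X \<subseteq> Y)"
  using subset_lquot[OF assms(2,4)] psubset_lquot_if_Som[OF assms(2,4)]
    upward_closed_subset_if_lquot_Som_subset[OF assms(2,3)]
  by blast

end
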